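(* Consider the episodic MDP and algorithm KBVI-BUCB described in the context, and let $\mathcal{E}$ be the event that for all $(s,a,h,k)\in\mathcal{S}\times\mathcal{A}\times[H]\times[K]$, \[ \big|(\widehat P_h^k-P_h)V_{h+1}^*(s,a)\big|\le8\sqrt{\frac{\widehat{\mathbb{V}}_h^k(V_{h+1}^*,s,a)\eta_1}{C_h^k(s,a)}}+\frac{H\eta_4}{C_h^k(s,a)}+\sigma D_\delta . \] Then on $\mathcal{E}$, $V_h^k(s)\ge V_h^*(s)$ for all $s\in\mathcal{S}$ and all $(h,k)\in[H+1]\times[K]$.
   Context: Setting. $(\mathcal{S},\rho_{\mathcal{S}})$, $(\mathcal{A},\rho_{\mathcal{A}})$ compact metric spaces; $\rho[(s,a),(s',a')]=\rho_{\mathcal{S}}(s,s')+\rho_{\mathcal{A}}(a,a')$; $[n]=\{1,\dots,n\}$. Episodic MDP with horizon $H$: transition kernels $P_h(\cdot\mid s,a)$ on the Borel sets of $\mathcal{S}$, known deterministic rewards $r_h\ge0$ with $\sum_{h=1}^Hr_h(s_h,a_h)\le H$ a.s. under every policy; $P_hf(s,a)=\int f\,dP_h(\cdot\mid s,a)$. Lipschitz assumption: $\lambda_r>0$, $\lambda_p\in(0,1)$ with $|r_h(s,a)-r_h(s',a')|\le\lambda_r\rho[(s,a),(s',a')]$ and $W_1(P_h(\cdot\mid s,a),P_h(\cdot\mid s',a'))\le\lambda_p\rho[(s,a),(s',a')]$. $V_h^*(s)=\sup_\pi\mathbb{E}[\sum_{t=h}^Hr_t\mid s_h=s,\pi]$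 over deterministic policies, $V^*_{H+1}\equiv0$. $L_h=\sum_{h'=h}^H\lambda_r\lambda_p^{H-h'}$. Kernel $g:[0,\infty)\to[0,1]$ differentiable, non-increasing, $g(4)>0$, $g(z)\le C_1e^{-z^2/2}$, $\sup|g'|\le C_2$. Algorithm KBVI-BUCB (bandwidth $\sigma>0$, $\beta\in(0,1]$, $\delta\in(0,1)$): in episode $k\in[K]$, initial state $s_1^k$ given; for $h=1..H$ play $a_h^k\in\arg\max_aQ_h^k(s_h^k,a)$, observe $s_{h+1}^k\sim P_h(\cdot\mid s_h^k,a_h^k)$. Using episodes $l<k$: $w_h^l(s,a)=g(\rho[(s,a),(s_h^l,a_h^l)]/\sigma)$, $C_h^k(s,a)=\beta+\sum_{l=1}^{k-1}w_h^l(s,a)$, $\widetilde w_h^{k,l}=w_h^l/C_h^k$, $\widehat P_h^kf(s,a)=\sum_{l<k}\widetilde w_h^{k,l}(s,a)f(s_{h+1}^l)$, $\widehat{\mathbb{V}}_h^k(f,s,a)=\sum_{l<k}\widetilde w_h^{k,l}(s,a)[f(s_{h+1}^l)-\widehat P_h^kf(s,a)]^2$. Constants: $\eta=\log(2/\delta)$, $\eta_1=C_1\eta$, $\eta_2=7\max\{C_1,1\}\eta+\beta$, $\eta_4=16\eta_1+2\eta_2$, $\gamma=4\sqrt{\log(HK/\beta+e)}$, $\eta_3=8\lambda_pL_1\eta\gamma$, $D_\delta=16\sqrt{C_2\eta_1\eta/\beta^3}+(C_2\eta_4+2C_2)\frac{\sigma}{H\beta^2}+\lambda_pL_1\frac{\sigma^2}{KH^2}+\eta_3$.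 Bonus $b_h^k=9\sqrt{\widehat{\mathbb{V}}_h^k(V_{h+1}^k,\cdot)\eta_4/C_h^k}+162H\eta_4/C_h^k+\sigma D_\delta$; $V_{H+1}^k\equiv0$, $\widetilde Q_h^k=r_h+\widehat P_h^kV_{h+1}^k+b_h^k$, $Q_h^1\equiv H$, $Q_h^k(s,a)=\min_{l\in[k-1]}\{\widetilde Q_h^k(s_h^l,a_h^l)+L_h\rho[(s,a),(s_h^l,a_h^l)]\}$ for $k\ge2$, $V_h^k(s)=\min\{\max_aQ_h^k(s,a),H\}$. *)

theory Defs
  imports "HOL-Probability.Probability"
begin

record ('s, 'a) kbvi_prm =
  Hh  :: nat
  Kk  :: nat
  gk  :: "real \<Rightarrow> real"
  sig :: real
  bet :: real
  del :: real
  cC1 :: real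
  cC2 :: real
  lr  :: real
  lp  :: real
  rw  :: "nat \<Rightarrow> 's \<Rightarrow> 'a \<Rightarrow> real"

definition rho :: "'s::metric_space \<times> 'a::metric_space \<Rightarrow> 's \<times> 'a \<Rightarrow> real" where
  "rho x y = dist (fst x) (fst y) + dist (snd x) (snd y)"

definition couplings :: "'s::metric_space measure \<Rightarrow> 's measure \<Rightarrow> ('s \<times> 's) measure set" where
  "couplings \<mu> \<nu> = {\<gamma>. sets \<gamma> = sets (borel :: ('s \<times> 's) measure) \<and> prob_space \<gamma> \<and>
      distr \<gamma> borel fst = \<mu> \<and> distr \<gamma> borel snd = \<nu>}"

definition W1 :: "'s::metric_space measure \<Rightarrow> 's measure \<Rightarrow> ennreal" where
  "W1 \<mu> \<nu> = (INF \<gamma>\<in>couplings \<mu> \<nu>. \<integral>\<^sup>+ z. ennreal (dist (fst z) (snd z)) \<partial>\<gamma>)"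

definition eta :: "('s,'a) kbvi_prm \<Rightarrow> real" where "eta p = ln (2 / del p)"
definition eta1 :: "('s,'a) kbvi_prm \<Rightarrow> real" where "eta1 p = cC1 p * eta p"
definition eta2 :: "('s,'a) kbvi_prm \<Rightarrow> real" where
  "eta2 p = 7 * max (cC1 p) 1 * eta p + bet p"
definition eta4 :: "('s,'a) kbvi_prm \<Rightarrow> real" where "eta4 p = 16 * eta1 p + 2 * eta2 p"
definition gam :: "('s,'a) kbvi_prm \<Rightarrow> real" where
  "gam p = 4 * sqrt (ln (real (Hh p) * real (Kk p) / bet p + exp 1))"
definition Lc :: "('s,'a) kbvi_prm \<Rightarrow> nat \<Rightarrow> real" where
  "Lc p h = (\<Sum>h'\<in>{h..Hh p}. lr p * lp p ^ (Hh p - h'))"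
definition eta3 :: "('s,'a) kbvi_prm \<Rightarrow> real" where
  "eta3 p = 8 * lp p * Lc p 1 * eta p * gam p"
definition Ddel :: "('s,'a) kbvi_prm \<Rightarrow> real" where
  "Ddel p = 16 * sqrt (cC2 p * eta1 p * eta p / bet p ^ 3)
          + (cC2 p * eta4 p + 2 * cC2 p) * sig p / (real (Hh p) * bet p ^ 2)
          + lp p * Lc p 1 * sig p ^ 2 / (real (Kk p) * real (Hh p) ^ 2)
          + eta3 p"

text \<open>Data: Ss l h = s_h^l, As l h = a_h^l (episode l, step h).\<close>
definition wgt :: "('s::metric_space,'a::metric_space) kbvi_prm \<Rightarrow> (nat \<Rightarrow> nat \<Rightarrow> 's) \<Rightarrow> (nat \<Rightarrow> nat \<Rightarrow> 'a)
    \<Rightarrow> nat \<Rightarrow> nat \<Rightarrow> 's \<times> 'a \<Rightarrow> real" where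
  "wgt p Ss As h l x = gk p (rho x (Ss l h, As l h) / sig p)"

definition Ccnt :: "('s::metric_space,'a::metric_space) kbvi_prm \<Rightarrow> (nat \<Rightarrow> nat \<Rightarrow> 's) \<Rightarrow> (nat \<Rightarrow> nat \<Rightarrow> 'a)
    \<Rightarrow> nat \<Rightarrow> nat \<Rightarrow> 's \<times> 'a \<Rightarrow> real" where
  "Ccnt p Ss As k h x = bet p + (\<Sum>l\<in>{1..<k}. wgt p Ss As h l x)"

definition Phat :: "('s::metric_space,'a::metric_space) kbvi_prm \<Rightarrow> (nat \<Rightarrow> nat \<Rightarrow> 's) \<Rightarrow> (nat \<Rightarrow> nat \<Rightarrow> 'a)
    \<Rightarrow> nat \<Rightarrow> nat \<Rightarrow> ('s \<Rightarrow> real) \<Rightarrow> 's \<times> 'a \<Rightarrow> real" where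
  "Phat p Ss As k h f x =
     (\<Sum>l\<in>{1..<k}. wgt p Ss As h l x / Ccnt p Ss As k h x * f (Ss l (Suc h)))"

definition Vhat :: "('s::metric_space,'a::metric_space) kbvi_prm \<Rightarrow> (nat \<Rightarrow> nat \<Rightarrow> 's) \<Rightarrow> (nat \<Rightarrow> nat \<Rightarrow> 'a)
    \<Rightarrow> nat \<Rightarrow> nat \<Rightarrow> ('s \<Rightarrow> real) \<Rightarrow> 's \<times> 'a \<Rightarrow> real" where
  "Vhat p Ss As k h f x =
     (\<Sum>l\<in>{1..<k}. wgt p Ss As h l x / Ccnt p Ss As k h x
        * (f (Ss l (Suc h)) - Phat p Ss As k h f x)\<^sup>2)"

definition bonus :: "('s::metric_space,'a::metric_space) kbvi_prm \<Rightarrow> (nat \<Rightarrow> nat \<Rightarrow> 's) \<Rightarrow> (nat \<Rightarrow> nat \<Rightarrow> 'a)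
    \<Rightarrow> nat \<Rightarrow> nat \<Rightarrow> ('s \<Rightarrow> real) \<Rightarrow> 's \<times> 'a \<Rightarrow> real" where
  "bonus p Ss As k h W x =
      9 * sqrt (Vhat p Ss As k h W x * eta4 p / Ccnt p Ss As k h x)
    + 162 * real (Hh p) * eta4 p / Ccnt p Ss As k h x
    + sig p * Ddel p"

text \<open>Q-tilde_h^k, where W plays the role of V_{h+1}^k.\<close>
definition Qtil :: "('s::metric_space,'a::metric_space) kbvi_prm \<Rightarrow> (nat \<Rightarrow> nat \<Rightarrow> 's) \<Rightarrow> (nat \<Rightarrow> nat \<Rightarrow> 'a)
    \<Rightarrow> nat \<Rightarrow> nat \<Rightarrow> ('s \<Rightarrow> real) \<Rightarrow> 's \<times> 'a \<Rightarrow> real" where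
  "Qtil p Ss As k h W x = rw p h (fst x) (snd x) + Phat p Ss As k h W x + bonus p Ss As k h W x"

definition Qk :: "('s::metric_space,'a::metric_space) kbvi_prm \<Rightarrow> (nat \<Rightarrow> nat \<Rightarrow> 's) \<Rightarrow> (nat \<Rightarrow> nat \<Rightarrow> 'a)
    \<Rightarrow> nat \<Rightarrow> nat \<Rightarrow> ('s \<Rightarrow> real) \<Rightarrow> 's \<times> 'a \<Rightarrow> real" where
  "Qk p Ss As k h W x =
     (if k \<le> 1 then real (Hh p)
      else Min ((\<lambda>l. Qtil p Ss As k h W (Ss l h, As l h) + Lc p h * rho x (Ss l h, As l h)) ` {1..<k}))"

definition Vstep :: "('s::metric_space,'a::metric_space) kbvi_prm \<Rightarrow> (nat \<Rightarrow> nat \<Rightarrow> 's) \<Rightarrow> (nat \<Rightarrow> nat \<Rightarrow> 'a)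
    \<Rightarrow> nat \<Rightarrow> nat \<Rightarrow> ('s \<Rightarrow> real) \<Rightarrow> 's \<Rightarrow> real" where
  "Vstep p Ss As k h W s = min (SUP a. Qk p Ss As k h W (s, a)) (real (Hh p))"

text \<open>Backward recursion: Vrem d = V_{H+1-d}^k.\<close>
primrec Vrem :: "('s::metric_space,'a::metric_space) kbvi_prm \<Rightarrow> (nat \<Rightarrow> nat \<Rightarrow> 's) \<Rightarrow> (nat \<Rightarrow> nat \<Rightarrow> 'a)
    \<Rightarrow> nat \<Rightarrow> nat \<Rightarrow> 's \<Rightarrow> real" where
  "Vrem p Ss As k 0 = (\<lambda>_. 0)"
| "Vrem p Ss As k (Suc d) = Vstep p Ss As k (Hh p - d) (Vrem p Ss As k d)"

definition Vk :: "('s::metric_space,'a::metric_space) kbvi_prm \<Rightarrow> (nat \<Rightarrow> nat \<Rightarrow> 's) \<Rightarrow> (nat \<Rightarrow> nat \<Rightarrow> 'a)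
    \<Rightarrow> nat \<Rightarrow> nat \<Rightarrow> 's \<Rightarrow> real" where
  "Vk p Ss As k h = (if Hh p < h then (\<lambda>_. 0) else Vrem p Ss As k (Hh p + 1 - h))"

definition policies :: "(nat \<Rightarrow> 's::metric_space \<Rightarrow> 'a::metric_space) set" where
  "policies = {\<pi>. \<forall>h. \<pi> h \<in> borel_measurable borel}"

primrec vrem :: "('s::metric_space,'a::metric_space) kbvi_prm \<Rightarrow> (nat \<Rightarrow> 's \<times> 'a \<Rightarrow> 's measure)
    \<Rightarrow> (nat \<Rightarrow> 's \<Rightarrow> 'a) \<Rightarrow> nat \<Rightarrow> 's \<Rightarrow> real" where
  "vrem p P \<pi> 0 = (\<lambda>_. 0)"
| "vrem p P \<pi> (Suc d) = (\<lambda>s. rw p (Hh p - d) s (\<pi> (Hh p - d) s)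
      + (\<integral>s'. vrem p P \<pi> d s' \<partial>(P (Hh p - d) (s, \<pi> (Hh p - d) s))))"

definition vpi :: "('s::metric_space,'a::metric_space) kbvi_prm \<Rightarrow> (nat \<Rightarrow> 's \<times> 'a \<Rightarrow> 's measure)
    \<Rightarrow> (nat \<Rightarrow> 's \<Rightarrow> 'a) \<Rightarrow> nat \<Rightarrow> 's \<Rightarrow> real" where
  "vpi p P \<pi> h = (if Hh p < h then (\<lambda>_. 0) else vrem p P \<pi> (Hh p + 1 - h))"

definition Vstar :: "('s::metric_space,'a::metric_space) kbvi_prm \<Rightarrow> (nat \<Rightarrow> 's \<times> 'a \<Rightarrow> 's measure)
    \<Rightarrow> nat \<Rightarrow> 's \<Rightarrow> real" where
  "Vstar p P h s = (if Hh p < h then 0 else (SUP \<pi>\<in>policies. vpi p P \<pi> h s))"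

definition eventE :: "('s::metric_space,'a::metric_space) kbvi_prm \<Rightarrow> (nat \<Rightarrow> 's \<times> 'a \<Rightarrow> 's measure)
    \<Rightarrow> (nat \<Rightarrow> nat \<Rightarrow> 's) \<Rightarrow> (nat \<Rightarrow> nat \<Rightarrow> 'a) \<Rightarrow> bool" where
  "eventE p P Ss As \<longleftrightarrow>
     (\<forall>s a h k. 1 \<le> h \<and> h \<le> Hh p \<and> 1 \<le> k \<and> k \<le> Kk p \<longrightarrow>
        \<bar>Phat p Ss As k h (Vstar p P (Suc h)) (s, a)
          - (\<integral>s'. Vstar p P (Suc h) s' \<partial>(P h (s, a)))\<bar>
        \<le> 8 * sqrt (Vhat p Ss As k h (Vstar p P (Suc h)) (s, a) * eta1 p / Ccnt p Ss As k h (s, a))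
          + real (Hh p) * eta4 p / Ccnt p Ss As k h (s, a)
          + sig p * Ddel p)"

end

theory Submission
  imports Defs
begin

(*
  Optimism is proved by backward induction over the horizon, comparing V^k_h with the Bellman
  recursion Vopt_h for the optimal value.

  Vopt_h is L_h-Lipschitz: the rewards are lambda_r-Lipschitz, and integrating an L-Lipschitz
  function against kernels that are lambda_p-Lipschitz in W_1 yields an (L lambda_p)-Lipschitz
  function (the easy half of Kantorovich-Rubinstein duality). Continuity on the compact state
  space allows near-greedy actions to be selected measurably, so Vopt coincides with V*, the
  supremum over measurable deterministic policies.

  For the induction step, on the event E the empirical backup of V*_{h+1} approximates
  P_h V*_{h+1}. Replacing V*_{h+1} by the larger V^k_{h+1} (with V^k_{h+1} - V*_{h+1} <= H)
  raises the empirical mean by some Delta and the empirical standard deviation by at most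
  sqrt (H Delta), which AM-GM absorbs into Delta and the bonus. Hence Q* <= Q~^k_h at the visited
  pairs, and the L_h-Lipschitz continuity of Q* carries this through the minimum defining Q^k_h
  to every state-action pair.
*)

section \<open>Lipschitz functions and the Wasserstein distance\<close>

lemma compact_UNIV_continuous_bound:
  fixes f :: "'x::metric_space \<Rightarrow> real"
  assumes "compact (UNIV :: 'x set)" and "continuous_on UNIV f"
  obtains B where "\<And>x. \<bar>f x\<bar> \<le> B"
  using compact_imp_bounded[OF compact_continuous_image[OF assms(2,1)]]
  unfolding bounded_real by auto

lemma compact_UNIV_dist_bound:
  fixes x y :: "'x::metric_space"
  assumes "compact (UNIV :: 'x set)"
  shows "dist x y \<le> diameter (UNIV :: 'x set)"
  using diameter_bounded_bound[OF compact_imp_bounded[OF assms]] by simp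

lemma rho_nonneg: "0 \<le> rho x y"
  unfolding rho_def by simp

lemma rho_le_2_dist: "rho x y \<le> 2 * dist x y"
  unfolding rho_def using dist_fst_le[of x y] dist_snd_le[of x y] by linarith

lemma lipschitz_on_UNIV_rhoI:
  fixes f :: "'s::metric_space \<times> 'a::metric_space \<Rightarrow> real"
  assumes "\<And>x y. \<bar>f x - f y\<bar> \<le> L * rho x y" and "0 \<le> L"
  shows "(2 * L)-lipschitz_on UNIV f"
proof (rule lipschitz_onI)
  fix x y :: "'s \<times> 'a"
  have "\<bar>f x - f y\<bar> \<le> L * rho x y" by (fact assms(1))
  also have "\<dots> \<le> L * (2 * dist x y)" using rho_le_2_dist assms(2) by (rule mult_left_mono)
  finally show "dist (f x) (f y) \<le> 2 * L * dist x y" by (simp add: dist_real_def)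
qed (use assms(2) in simp)

lemma lipschitz_on_SUP:
  fixes Q :: "'s::metric_space \<Rightarrow> 'a \<Rightarrow> real"
  assumes lip: "\<And>a. L-lipschitz_on UNIV (\<lambda>s. Q s a)"
    and bdd: "\<And>s. bdd_above (range (Q s))"
    and "0 \<le> L"
  shows "L-lipschitz_on UNIV (\<lambda>s. SUP a. Q s a)"
proof -
  have le: "(SUP a. Q s a) \<le> (SUP a. Q s' a) + L * dist s s'" for s s'
  proof (rule cSUP_least)
    fix a
    have "Q s a \<le> Q s' a + L * dist s s'"
      using lipschitz_onD[OF lip, of s s' a] by (simp add: dist_real_def abs_le_iff)
    also have "Q s' a \<le> (SUP a. Q s' a)" by (rule cSUP_upper[OF _ bdd]) simp
    finally show "Q s a \<le> (SUP a. Q s' a) + L * dist s s'" by simp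
  qed simp
  show ?thesis
  proof (rule lipschitz_onI)
    fix s s' :: 's
    show "dist (SUP a. Q s a) (SUP a. Q s' a) \<le> L * dist s s'"
      using le[of s s'] le[of s' s] by (simp add: dist_real_def abs_le_iff dist_commute)
  qed fact
qed

lemma coupling_measurable_continuous:
  fixes h :: "'s::metric_space \<times> 's \<Rightarrow> 'b::topological_space"
  assumes "\<gamma> \<in> couplings \<mu> \<nu>" and "continuous_on UNIV h"
  shows "h \<in> borel_measurable \<gamma>"
proof -
  have "sets \<gamma> = sets (borel :: ('s \<times> 's) measure)" using assms(1) by (simp add: couplings_def)
  then show ?thesis
    using measurable_cong_sets borel_measurable_continuous_onI[OF assms(2)] by blast
qed

lemma coupling_integrable_dist:
  assumes "compact (UNIV :: 's::metric_space set)" and \<gamma>: "\<gamma> \<in> couplings \<mu> (\<nu> :: 's measure)"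
  shows "integrable \<gamma> (\<lambda>z. dist (fst z) (snd z))"
proof -
  interpret prob_space \<gamma> using \<gamma> by (simp add: couplings_def)
  show ?thesis
    using compact_UNIV_dist_bound[OF assms(1)]
    by (intro integrable_const_bound[where B="diameter (UNIV :: 's set)"]
        coupling_measurable_continuous[OF \<gamma>] continuous_intros) auto
qed

lemma lipschitz_integral_diff_le_coupling:
  fixes f :: "'s::metric_space \<Rightarrow> real"
  assumes compact: "compact (UNIV :: 's set)" and lip: "L-lipschitz_on UNIV f"
    and \<gamma>: "\<gamma> \<in> couplings \<mu> \<nu>"
  shows "\<bar>(\<integral>x. f x \<partial>\<mu>) - (\<integral>x. f x \<partial>\<nu>)\<bar> \<le> L * (\<integral>z. dist (fst z) (snd z) \<partial>\<gamma>)"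
proof -
  interpret prob_space \<gamma> using \<gamma> by (simp add: couplings_def)
  have cont: "continuous_on UNIV f" using lipschitz_on_continuous_on[OF lip] .
  have f_meas: "f \<in> borel_measurable borel" using cont by (rule borel_measurable_continuous_onI)
  obtain B where B: "\<And>x. \<bar>f x\<bar> \<le> B" using compact_UNIV_continuous_bound[OF compact cont] by blast
  have fst_meas: "fst \<in> \<gamma> \<rightarrow>\<^sub>M (borel :: 's measure)" and snd_meas: "snd \<in> \<gamma> \<rightarrow>\<^sub>M (borel :: 's measure)"
    by (intro coupling_measurable_continuous[OF \<gamma>] continuous_intros)+
  have int1: "integrable \<gamma> (\<lambda>z. f (fst z))" and int2: "integrable \<gamma> (\<lambda>z. f (snd z))"
    using B by (auto intro!: integrable_const_bound[where B=B] measurable_compose[OF _ f_meas]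
        fst_meas snd_meas)
  have "(\<integral>x. f x \<partial>\<mu>) - (\<integral>x. f x \<partial>\<nu>) = (\<integral>z. f (fst z) - f (snd z) \<partial>\<gamma>)"
    using integral_distr[OF fst_meas f_meas] integral_distr[OF snd_meas f_meas] \<gamma>
      Bochner_Integration.integral_diff[OF int1 int2] by (simp add: couplings_def)
  also have "\<bar>\<dots>\<bar> \<le> (\<integral>z. \<bar>f (fst z) - f (snd z)\<bar> \<partial>\<gamma>)"
    by (rule integral_abs_bound)
  also have "\<dots> \<le> (\<integral>z. L * dist (fst z) (snd z) \<partial>\<gamma>)"
    using lipschitz_onD[OF lip] int1 int2 coupling_integrable_dist[OF compact \<gamma>]
    by (intro integral_mono) (auto simp: dist_real_def)
  finally show ?thesis by simp
qed

lemma lipschitz_integral_diff_le_W1: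
  fixes f :: "'s::metric_space \<Rightarrow> real"
  assumes compact: "compact (UNIV :: 's set)"
    and \<mu>: "\<mu> \<in> space (prob_algebra borel)" and \<nu>: "\<nu> \<in> space (prob_algebra borel)"
    and lip: "L-lipschitz_on UNIV f"
    and W1: "W1 \<mu> \<nu> \<le> ennreal c" and "0 \<le> c"
  shows "\<bar>(\<integral>x. f x \<partial>\<mu>) - (\<integral>x. f x \<partial>\<nu>)\<bar> \<le> L * c"
proof (cases "L = 0")
  case True
  then have "f x = f undefined" for x
    using lipschitz_onD[OF lip, of x undefined] by simp
  then obtain y where "f = (\<lambda>_. y)" by blast
  moreover have "prob_space \<mu>" "prob_space \<nu>" using \<mu> \<nu> by (auto simp: space_prob_algebra)
  ultimately show ?thesis using True by (simp add: prob_space.prob_space)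
next
  case False
  let ?\<Delta> = "(\<integral>x. f x \<partial>\<mu>) - (\<integral>x. f x \<partial>\<nu>)"
  have L: "0 < L" using False lipschitz_on_nonneg[OF lip] by simp
  have "ennreal (\<bar>?\<Delta>\<bar> / L) \<le> W1 \<mu> \<nu>"
    unfolding W1_def
  proof (rule INF_greatest)
    fix \<gamma> assume \<gamma>: "\<gamma> \<in> couplings \<mu> \<nu>"
    have "\<bar>?\<Delta>\<bar> / L \<le> (\<integral>z. dist (fst z) (snd z) \<partial>\<gamma>)"
      using lipschitz_integral_diff_le_coupling[OF compact lip \<gamma>] L
      by (simp add: divide_le_eq mult.commute)
    also have "ennreal \<dots> = (\<integral>\<^sup>+ z. ennreal (dist (fst z) (snd z)) \<partial>\<gamma>)"
      by (rule nn_integral_eq_integral[OF coupling_integrable_dist[OF compact \<gamma>], symmetric]) auto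
    finally show "ennreal (\<bar>?\<Delta>\<bar> / L) \<le> \<dots>" by (simp add: ennreal_leI)
  qed
  also note W1
  finally have "\<bar>?\<Delta>\<bar> / L \<le> c" using \<open>0 \<le> c\<close> by (simp add: ennreal_le_iff)
  then show ?thesis using L by (simp add: divide_le_eq mult.commute)
qed

section \<open>Measurable selection of near maximisers\<close>

primrec first_cover :: "('a \<Rightarrow> 's set) \<Rightarrow> 'a \<Rightarrow> 'a list \<Rightarrow> 's \<Rightarrow> 'a" where
  "first_cover U a0 [] s = a0"
| "first_cover U a0 (a # as) s = (if s \<in> U a then a else first_cover U a0 as s)"

lemma first_cover_mem: "s \<in> (\<Union>a\<in>set as. U a) \<Longrightarrow> s \<in> U (first_cover U a0 as s)"
  by (induction as) auto

lemma first_cover_measurable: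
  fixes U :: "'a::metric_space \<Rightarrow> 's::metric_space set"
  assumes "\<forall>a\<in>set as. open (U a)"
  shows "(\<lambda>s. (s, first_cover U a0 as s)) \<in> borel \<rightarrow>\<^sub>M (borel :: ('s \<times> 'a) measure)"
  using assms
proof (induction as)
  case Nil
  show ?case by (simp add: borel_measurable_continuous_onI continuous_intros)
next
  case (Cons a as)
  have "(\<lambda>s. (s, a)) \<in> borel \<rightarrow>\<^sub>M (borel :: ('s \<times> 'a) measure)"
    by (intro borel_measurable_continuous_onI continuous_intros)
  moreover have "U a \<inter> space borel \<in> sets borel" using Cons.prems by auto
  ultimately have "(\<lambda>s. if s \<in> U a then (s, a) else (s, first_cover U a0 as s)) \<in> borel \<rightarrow>\<^sub>M borel"
    using Cons by (intro measurable_If_set) auto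
  moreover have "(\<lambda>s. if s \<in> U a then (s, a) else (s, first_cover U a0 as s))
      = (\<lambda>s. (s, first_cover U a0 (a # as) s))"
    by auto
  ultimately show ?case by simp
qed

lemma measurable_approx_maximizer:
  fixes Q :: "'s::metric_space \<times> 'a::metric_space \<Rightarrow> real"
  assumes compact: "compact (UNIV :: 's set)"
    and cont_Q: "continuous_on UNIV Q"
    and cont_sup: "continuous_on UNIV (\<lambda>s. SUP a. Q (s, a))"
    and bdd: "\<And>s. bdd_above (range (\<lambda>a. Q (s, a)))"
    and "0 < \<epsilon>"
  obtains \<sigma> where "(\<lambda>s. (s, \<sigma> s)) \<in> borel \<rightarrow>\<^sub>M (borel :: ('s \<times> 'a) measure)"
    and "\<sigma> \<in> borel_measurable borel"
    and "\<And>s. (SUP a. Q (s, a)) - \<epsilon> \<le> Q (s, \<sigma> s)"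
proof -
  define U where "U a = {s. (SUP a. Q (s, a)) - \<epsilon> < Q (s, a)}" for a
  have "open (U a)" for a
    unfolding U_def
    by (intro open_Collect_less continuous_intros cont_sup
        continuous_on_compose2[OF cont_Q]) auto
  moreover have "UNIV \<subseteq> (\<Union>a. U a)"
  proof
    fix s
    have "(SUP a. Q (s, a)) - \<epsilon> < (SUP a. Q (s, a))" using \<open>0 < \<epsilon>\<close> by simp
    then show "s \<in> (\<Union>a. U a)"
      unfolding U_def using less_cSUP_iff[of UNIV "\<lambda>a. Q (s, a)"] bdd by auto
  qed
  ultimately obtain D where "finite D" "UNIV \<subseteq> (\<Union>a\<in>D. U a)"
    using compactE_image[OF compact, of UNIV U] by metis
  then obtain as where "UNIV \<subseteq> (\<Union>a\<in>set as. U a)" using finite_list by metis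
  define \<sigma> where "\<sigma> = first_cover U undefined as"
  show ?thesis
  proof
    show pair_meas: "(\<lambda>s. (s, \<sigma> s)) \<in> borel \<rightarrow>\<^sub>M (borel :: ('s \<times> 'a) measure)"
      unfolding \<sigma>_def using \<open>\<And>a. open (U a)\<close> by (intro first_cover_measurable) auto
    have "(snd :: 's \<times> 'a \<Rightarrow> 'a) \<in> borel_measurable borel"
      by (intro borel_measurable_continuous_onI continuous_on_snd continuous_on_id)
    then have "(\<lambda>s. snd (s, \<sigma> s)) \<in> borel_measurable borel"
      by (rule measurable_compose[OF pair_meas])
    then show "\<sigma> \<in> borel_measurable borel" by simp
    show "(SUP a. Q (s, a)) - \<epsilon> \<le> Q (s, \<sigma> s)" for s
    proof -
      have "s \<in> U (\<sigma> s)"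
        unfolding \<sigma>_def by (rule first_cover_mem) (use \<open>UNIV \<subseteq> (\<Union>a\<in>set as. U a)\<close> in blast)
      then show ?thesis unfolding U_def by simp
    qed
  qed
qed

section \<open>Weighted empirical moments\<close>

lemma weighted_L2_triangle:
  fixes w u v :: "'i \<Rightarrow> real"
  assumes "\<forall>l\<in>I. 0 \<le> w l"
  shows "sqrt (\<Sum>l\<in>I. w l * (u l + v l)\<^sup>2)
    \<le> sqrt (\<Sum>l\<in>I. w l * (u l)\<^sup>2) + sqrt (\<Sum>l\<in>I. w l * (v l)\<^sup>2)"
proof -
  have L2: "sqrt (\<Sum>l\<in>I. w l * (x l)\<^sup>2) = L2_set (\<lambda>l. sqrt (w l) * x l) I" for x
    unfolding L2_set_def using assms by (intro arg_cong[where f=sqrt] sum.cong) (auto simp: power_mult_distrib)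
  show ?thesis
    unfolding L2 distrib_left by (rule L2_set_triangle_ineq)
qed

lemma sqrt_weighted_variance_le:
  fixes w a b :: "'i \<Rightarrow> real"
  assumes w0: "\<forall>l\<in>I. 0 \<le> w l" and w1: "(\<Sum>l\<in>I. w l) \<le> 1"
    and ab: "\<forall>l\<in>I. a l \<le> b l \<and> b l \<le> a l + H"
  shows "sqrt (\<Sum>l\<in>I. w l * (a l - (\<Sum>j\<in>I. w j * a j))\<^sup>2)
    \<le> sqrt (\<Sum>l\<in>I. w l * (b l - (\<Sum>j\<in>I. w j * b j))\<^sup>2)
      + sqrt (H * ((\<Sum>j\<in>I. w j * b j) - (\<Sum>j\<in>I. w j * a j)))"
proof -
  define ma mb where "ma = (\<Sum>j\<in>I. w j * a j)" and "mb = (\<Sum>j\<in>I. w j * b j)"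
  define d where "d l = b l - a l" for l
  have md: "mb - ma = (\<Sum>j\<in>I. w j * d j)"
    unfolding ma_def mb_def d_def by (simp add: sum_subtractf right_diff_distrib)
  have "(\<Sum>l\<in>I. w l * (d l - (mb - ma))\<^sup>2)
      = (\<Sum>l\<in>I. w l * (d l)\<^sup>2) - 2 * (mb - ma) * (\<Sum>l\<in>I. w l * d l)
        + (mb - ma)\<^sup>2 * (\<Sum>l\<in>I. w l)"
    by (simp add: power2_eq_square algebra_simps sum.distrib sum_subtractf
        sum_distrib_left sum_distrib_right)
  also have "\<dots> = (\<Sum>l\<in>I. w l * (d l)\<^sup>2) - (mb - ma)\<^sup>2 * (2 - (\<Sum>l\<in>I. w l))"
    unfolding md[symmetric] by (simp add: power2_eq_square algebra_simps)
  also have "\<dots> \<le> (\<Sum>l\<in>I. w l * (d l)\<^sup>2)"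
    using w1 by simp
  also have "\<dots> \<le> (\<Sum>l\<in>I. w l * (H * d l))"
    using w0 ab unfolding d_def power2_eq_square
    by (intro sum_mono mult_left_mono mult_right_mono) auto
  also have "\<dots> = H * (mb - ma)"
    unfolding md by (simp add: sum_distrib_left algebra_simps)
  finally have spread: "(\<Sum>l\<in>I. w l * (- (d l - (mb - ma)))\<^sup>2) \<le> H * (mb - ma)"
    by (simp add: power2_commute)
  have "sqrt (\<Sum>l\<in>I. w l * (a l - ma)\<^sup>2)
      = sqrt (\<Sum>l\<in>I. w l * ((b l - mb) + - (d l - (mb - ma)))\<^sup>2)"
    unfolding d_def by (simp add: algebra_simps)
  also have "\<dots> \<le> sqrt (\<Sum>l\<in>I. w l * (b l - mb)\<^sup>2) + sqrt (\<Sum>l\<in>I. w l * (- (d l - (mb - ma)))\<^sup>2)"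
    using w0 by (rule weighted_L2_triangle)
  also have "\<dots> \<le> sqrt (\<Sum>l\<in>I. w l * (b l - mb)\<^sup>2) + sqrt (H * (mb - ma))"
    using spread by simp
  finally show ?thesis unfolding ma_def mb_def .
qed

section \<open>Dynamic programming for the optimal value\<close>

lemma Lc_beyond_horizon: "Lc p (Suc (Hh p)) = 0"
  unfolding Lc_def by simp

lemma Lc_step:
  assumes "h \<le> Hh p"
  shows "Lc p h = lr p + lp p * Lc p (Suc h)"
proof -
  have "Lc p h = (\<Sum>i\<le>Hh p - h. lr p * lp p ^ i)" if "h \<le> Hh p" for h
    unfolding Lc_def
    by (rule sum.reindex_bij_witness[where i="\<lambda>i. Hh p - i" and j="\<lambda>h'. Hh p - h'"])
       (use that in auto)
  note geometric = this
  show ?thesis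
  proof (cases "h = Hh p")
    case True
    then show ?thesis by (simp add: Lc_def)
  next
    case False
    with assms have "Hh p - h = Suc (Hh p - Suc h)" "Suc h \<le> Hh p" by auto
    then show ?thesis
      using assms by (simp add: geometric sum.atMost_Suc_shift sum_distrib_left algebra_simps
          del: sum.atMost_Suc)
  qed
qed

function Vopt :: "('s::metric_space, 'a::metric_space) kbvi_prm \<Rightarrow> (nat \<Rightarrow> 's \<times> 'a \<Rightarrow> 's measure)
    \<Rightarrow> nat \<Rightarrow> 's \<Rightarrow> real" where
  "Vopt p P h = (if Hh p < h then (\<lambda>_. 0)
     else (\<lambda>s. SUP a. rw p h s a + (\<integral>s'. Vopt p P (Suc h) s' \<partial>P h (s, a))))"
  by auto
termination by (relation "Wellfounded.measure (\<lambda>(p, P, h). Suc (Hh p) - h)") auto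

declare Vopt.simps [simp del]

definition Qopt :: "('s::metric_space, 'a::metric_space) kbvi_prm \<Rightarrow> (nat \<Rightarrow> 's \<times> 'a \<Rightarrow> 's measure)
    \<Rightarrow> nat \<Rightarrow> 's \<times> 'a \<Rightarrow> real" where
  "Qopt p P h x = rw p h (fst x) (snd x) + (\<integral>s'. Vopt p P (Suc h) s' \<partial>P h x)"

lemma Vopt_step: "h \<le> Hh p \<Longrightarrow> Vopt p P h = (\<lambda>s. SUP a. Qopt p P h (s, a))"
  by (subst Vopt.simps) (simp add: Qopt_def)

lemma Vopt_beyond_horizon: "Vopt p P (Suc (Hh p)) = (\<lambda>_. 0)"
  by (subst Vopt.simps) simp

lemma vpi_step:
  assumes "h \<le> Hh p"
  shows "vpi p P \<pi> h s = rw p h s (\<pi> h s) + (\<integral>s'. vpi p P \<pi> (Suc h) s' \<partial>P h (s, \<pi> h s))"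
proof -
  have "vpi p P \<pi> h = vrem p P \<pi> (Suc (Hh p - h))" "vpi p P \<pi> (Suc h) = vrem p P \<pi> (Hh p - h)"
    using assms by (simp_all add: vpi_def Suc_diff_le)
  then show ?thesis using assms by simp
qed

lemma vpi_beyond_horizon: "vpi p P \<pi> (Suc (Hh p)) = (\<lambda>_. 0)"
  unfolding vpi_def by simp

lemma vrem_cong: "(\<And>d'. d' < d \<Longrightarrow> \<pi> (Hh p - d') = \<pi>' (Hh p - d')) \<Longrightarrow> vrem p P \<pi> d = vrem p P \<pi>' d"
  by (induction d) auto

lemma vpi_fun_upd_current: "vpi p P (\<pi>(h := \<sigma>)) (Suc h) = vpi p P \<pi> (Suc h)"
  unfolding vpi_def by (auto intro!: vrem_cong)

lemma Vk_step:
  assumes "h \<le> Hh p"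
  shows "Vk p Ss As k h = Vstep p Ss As k h (Vk p Ss As k (Suc h))"
proof -
  have "Vk p Ss As k h = Vrem p Ss As k (Suc (Hh p - h))" "Vk p Ss As k (Suc h) = Vrem p Ss As k (Hh p - h)"
    using assms by (simp_all add: Vk_def Suc_diff_le)
  then show ?thesis using assms by simp
qed

lemma Vk_beyond_horizon: "Vk p Ss As k (Suc (Hh p)) = (\<lambda>_. 0)"
  unfolding Vk_def by simp

lemma Vk_le_H: "Vk p Ss As k h s \<le> real (Hh p)"
  by (cases "h \<le> Hh p") (simp_all add: Vk_step Vstep_def, simp add: Vk_def)

lemma constant_policy: "(\<lambda>_ _. a) \<in> policies"
  unfolding policies_def by simp

locale lipschitz_mdp =
  fixes p :: "('s::metric_space, 'a::metric_space) kbvi_prm"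
    and P :: "nat \<Rightarrow> 's \<times> 'a \<Rightarrow> 's measure"
  assumes compact_states: "compact (UNIV :: 's set)"
    and compact_actions: "compact (UNIV :: 'a set)"
    and kernel: "\<forall>h\<in>{1..Hh p}. P h \<in> borel \<rightarrow>\<^sub>M prob_algebra borel"
    and rw_nonneg: "\<forall>h\<in>{1..Hh p}. \<forall>s a. 0 \<le> rw p h s a"
    and rw_bound: "\<forall>\<pi>\<in>policies. \<forall>h\<in>{1..Hh p}. \<forall>s. vpi p P \<pi> h s \<le> real (Hh p)"
    and lr_pos: "0 < lr p" and lp_pos: "0 < lp p"
    and rw_lip: "\<forall>h\<in>{1..Hh p}. \<forall>s a s' a'.
                   \<bar>rw p h s a - rw p h s' a'\<bar> \<le> lr p * rho (s, a) (s', a')"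
    and P_lip: "\<forall>h\<in>{1..Hh p}. \<forall>s a s' a'.
                   W1 (P h (s, a)) (P h (s', a')) \<le> ennreal (lp p * rho (s, a) (s', a'))"
begin

lemma Lc_nonneg: "0 \<le> Lc p h"
  unfolding Lc_def using lr_pos lp_pos by (intro sum_nonneg) auto

lemma P_space: "h \<in> {1..Hh p} \<Longrightarrow> P h x \<in> space (prob_algebra borel)"
  using kernel measurable_space[of "P h" borel "prob_algebra borel" x] by auto

lemma prob_space_P: "h \<in> {1..Hh p} \<Longrightarrow> prob_space (P h x)"
  using P_space by (auto simp: space_prob_algebra)

lemma sets_P: "h \<in> {1..Hh p} \<Longrightarrow> sets (P h x) = sets borel"
  using P_space by (auto simp: space_prob_algebra)

lemma integrable_P:
  fixes f :: "'s \<Rightarrow> real"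
  assumes "h \<in> {1..Hh p}" "f \<in> borel_measurable borel" "\<And>s. \<bar>f s\<bar> \<le> B"
  shows "integrable (P h x) f"
proof -
  interpret prob_space "P h x" using prob_space_P[OF assms(1)] .
  have "f \<in> borel_measurable (P h x)"
    using assms(2) by (subst measurable_cong_sets[OF sets_P[OF assms(1)] refl])
  then show ?thesis
    using assms(3) by (intro integrable_const_bound[where B=B]) auto
qed

lemma integrable_P_lipschitz:
  fixes f :: "'s \<Rightarrow> real"
  assumes "h \<in> {1..Hh p}" and "L-lipschitz_on UNIV f"
  shows "integrable (P h x) f"
proof -
  have cont: "continuous_on UNIV f" using assms(2) by (rule lipschitz_on_continuous_on)
  then obtain B where "\<And>s. \<bar>f s\<bar> \<le> B"
    using compact_UNIV_continuous_bound[OF compact_states] by blast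
  then show ?thesis using cont by (intro integrable_P[OF assms(1)] borel_measurable_continuous_onI)
qed

lemma vpi_nonneg:
  assumes "1 \<le> h"
  shows "0 \<le> vpi p P \<pi> h s"
proof -
  have "0 \<le> vrem p P \<pi> d s" if "d \<le> Hh p" for d s
    using that
  proof (induction d arbitrary: s)
    case (Suc d)
    then show ?case
      using rw_nonneg by (auto intro!: add_nonneg_nonneg integral_nonneg_AE)
  qed simp
  then show ?thesis using assms by (simp add: vpi_def)
qed

lemma vpi_le_H: "\<pi> \<in> policies \<Longrightarrow> 1 \<le> h \<Longrightarrow> vpi p P \<pi> h s \<le> real (Hh p)"
  using rw_bound by (cases "h \<le> Hh p") (auto simp: vpi_def)

lemma rw_lipschitz: "h \<in> {1..Hh p} \<Longrightarrow> (2 * lr p)-lipschitz_on UNIV (\<lambda>x. rw p h (fst x) (snd x))"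
  using rw_lip lr_pos by (intro lipschitz_on_UNIV_rhoI) (auto simp: split_paired_all)

text \<open>Lipschitz continuity of \<^const>\<open>Vopt\<close> is carried through the backward induction
  because it is what makes near-greedy actions measurably selectable, so that \<^const>\<open>Vopt\<close>
  is approached by policies.\<close>
definition bellman_invariant :: "nat \<Rightarrow> bool" where
  "bellman_invariant h \<longleftrightarrow>
     (Lc p h)-lipschitz_on UNIV (Vopt p P h)
     \<and> (\<forall>s. 0 \<le> Vopt p P h s)
     \<and> (\<forall>\<pi>\<in>policies. \<forall>s. vpi p P \<pi> h s \<le> Vopt p P h s)
     \<and> (\<forall>\<epsilon>>0. \<exists>\<pi>\<in>policies. vpi p P \<pi> h \<in> borel_measurable borel
                              \<and> (\<forall>s. Vopt p P h s - \<epsilon> \<le> vpi p P \<pi> h s))"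

lemma bellman_invariant_beyond_horizon: "bellman_invariant (Suc (Hh p))"
  unfolding bellman_invariant_def Vopt_beyond_horizon vpi_beyond_horizon Lc_beyond_horizon
  using constant_policy by (auto simp: lipschitz_on_def)

lemma Qopt_lipschitz:
  assumes h: "h \<in> {1..Hh p}" and lip: "(Lc p (Suc h))-lipschitz_on UNIV (Vopt p P (Suc h))"
  shows "\<bar>Qopt p P h x - Qopt p P h y\<bar> \<le> Lc p h * rho x y"
proof -
  have "\<bar>rw p h (fst x) (snd x) - rw p h (fst y) (snd y)\<bar> \<le> lr p * rho x y"
    using rw_lip h by (cases x, cases y) auto
  moreover have "W1 (P h x) (P h y) \<le> ennreal (lp p * rho x y)"
    using P_lip h by (cases x, cases y) auto
  then have "\<bar>(\<integral>s'. Vopt p P (Suc h) s' \<partial>P h x) - (\<integral>s'. Vopt p P (Suc h) s' \<partial>P h y)\<bar>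
      \<le> Lc p (Suc h) * (lp p * rho x y)"
    using lp_pos rho_nonneg[of x y]
    by (intro lipschitz_integral_diff_le_W1[OF compact_states P_space[OF h] P_space[OF h] lip]) auto
  ultimately have "\<bar>Qopt p P h x - Qopt p P h y\<bar> \<le> lr p * rho x y + Lc p (Suc h) * (lp p * rho x y)"
    unfolding Qopt_def by linarith
  also have "\<dots> = Lc p h * rho x y"
    using h by (simp add: Lc_step algebra_simps)
  finally show ?thesis .
qed

lemma Qopt_continuous_bdd:
  assumes "h \<in> {1..Hh p}" and "(Lc p (Suc h))-lipschitz_on UNIV (Vopt p P (Suc h))"
  shows "continuous_on UNIV (Qopt p P h)" and "bdd_above (range (\<lambda>a. Qopt p P h (s, a)))"
proof -
  show cont: "continuous_on UNIV (Qopt p P h)"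
    using Qopt_lipschitz[OF assms] Lc_nonneg
    by (intro lipschitz_on_continuous_on[OF lipschitz_on_UNIV_rhoI])
  have "compact (UNIV :: ('s \<times> 'a) set)"
    using compact_Times[OF compact_states compact_actions] by simp
  then obtain B where "\<And>x. \<bar>Qopt p P h x\<bar> \<le> B"
    using compact_UNIV_continuous_bound cont by blast
  then show "bdd_above (range (\<lambda>a. Qopt p P h (s, a)))"
    by (intro bdd_aboveI[where M=B]) (auto simp: abs_le_iff)
qed

lemma vpi_measurable_step:
  assumes h: "h \<in> {1..Hh p}"
    and next_meas: "vpi p P \<pi> (Suc h) \<in> borel_measurable borel"
    and action_meas: "(\<lambda>s. (s, \<pi> h s)) \<in> borel \<rightarrow>\<^sub>M (borel :: ('s \<times> 'a) measure)"
  shows "vpi p P \<pi> h \<in> borel_measurable borel"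
proof -
  define q where "q x = rw p h (fst x) (snd x) + (\<integral>s'. vpi p P \<pi> (Suc h) s' \<partial>P h x)" for x
  have "(\<lambda>x. rw p h (fst x) (snd x)) \<in> borel_measurable (borel :: ('s \<times> 'a) measure)"
    using lipschitz_on_continuous_on[OF rw_lipschitz[OF h]] by (rule borel_measurable_continuous_onI)
  moreover have "P h \<in> borel \<rightarrow>\<^sub>M subprob_algebra borel"
    using kernel h by (auto intro: measurable_prob_algebraD)
  then have "(\<lambda>x. \<integral>s'. vpi p P \<pi> (Suc h) s' \<partial>P h x) \<in> borel_measurable (borel :: ('s \<times> 'a) measure)"
    using measurable_compose integral_measurable_subprob_algebra[OF next_meas] by blast
  ultimately have "q \<in> borel_measurable borel" unfolding q_def by measurable
  moreover have "vpi p P \<pi> h = (\<lambda>s. q (s, \<pi> h s))"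
    using h by (auto simp: vpi_step q_def)
  ultimately show ?thesis using measurable_compose[OF action_meas] by simp
qed

lemma Vopt_lipschitz:
  assumes h: "h \<in> {1..Hh p}" and lip: "(Lc p (Suc h))-lipschitz_on UNIV (Vopt p P (Suc h))"
  shows "(Lc p h)-lipschitz_on UNIV (Vopt p P h)"
proof -
  have "(Lc p h)-lipschitz_on UNIV (\<lambda>s. Qopt p P h (s, a))" for a
  proof (rule lipschitz_onI)
    fix s s' :: 's
    show "dist (Qopt p P h (s, a)) (Qopt p P h (s', a)) \<le> Lc p h * dist s s'"
      using Qopt_lipschitz[OF h lip, of "(s, a)" "(s', a)"] by (simp add: dist_real_def rho_def)
  qed (rule Lc_nonneg)
  then have "(Lc p h)-lipschitz_on UNIV (\<lambda>s. SUP a. Qopt p P h (s, a))"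
    using Qopt_continuous_bdd(2)[OF h lip] Lc_nonneg by (rule lipschitz_on_SUP)
  then show ?thesis using h by (simp add: Vopt_step)
qed

lemma near_optimal_policy:
  assumes h: "h \<in> {1..Hh p}" and inv: "bellman_invariant (Suc h)" and "0 < \<epsilon>"
  obtains \<pi> where "\<pi> \<in> policies" "vpi p P \<pi> h \<in> borel_measurable borel"
    "\<And>s. Vopt p P h s - \<epsilon> \<le> vpi p P \<pi> h s"
proof -
  let ?W = "Vopt p P (Suc h)"
  have lip: "(Lc p (Suc h))-lipschitz_on UNIV ?W" using inv by (simp add: bellman_invariant_def)
  obtain \<pi>' where \<pi>': "\<pi>' \<in> policies" and next_meas: "vpi p P \<pi>' (Suc h) \<in> borel_measurable borel"
    and next_approx: "\<And>s. ?W s - \<epsilon> / 2 \<le> vpi p P \<pi>' (Suc h) s"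
    using inv \<open>0 < \<epsilon>\<close> unfolding bellman_invariant_def by (meson half_gt_zero)
  have Vopt_h: "Vopt p P h = (\<lambda>s. SUP a. Qopt p P h (s, a))"
    using h by (simp add: Vopt_step)
  have "continuous_on UNIV (\<lambda>s. SUP a. Qopt p P h (s, a))"
    using lipschitz_on_continuous_on[OF Vopt_lipschitz[OF h lip]] by (simp add: Vopt_h)
  then obtain \<sigma> where \<sigma>_meas: "(\<lambda>s. (s, \<sigma> s)) \<in> borel \<rightarrow>\<^sub>M (borel :: ('s \<times> 'a) measure)"
    and "\<sigma> \<in> borel_measurable borel" and \<sigma>_approx: "\<And>s. (SUP a. Qopt p P h (s, a)) - \<epsilon> / 2 \<le> Qopt p P h (s, \<sigma> s)"
    using measurable_approx_maximizer[OF compact_states Qopt_continuous_bdd(1)[OF h lip] _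
        Qopt_continuous_bdd(2)[OF h lip] half_gt_zero[OF \<open>0 < \<epsilon>\<close>]]
    by blast
  define \<pi> where "\<pi> = \<pi>'(h := \<sigma>)"
  show ?thesis
  proof
    show "\<pi> \<in> policies" using \<pi>' \<open>\<sigma> \<in> borel_measurable borel\<close> by (auto simp: \<pi>_def policies_def)
    show "vpi p P \<pi> h \<in> borel_measurable borel"
      by (rule vpi_measurable_step[OF h]) (use next_meas \<sigma>_meas in \<open>simp_all add: \<pi>_def vpi_fun_upd_current\<close>)
    fix s
    interpret prob_space "P h (s, \<sigma> s)" using prob_space_P[OF h] .
    have W_int: "integrable (P h (s, \<sigma> s)) ?W" using integrable_P_lipschitz[OF h lip] .
    have "\<bar>vpi p P \<pi>' (Suc h) s'\<bar> \<le> real (Hh p)" for s'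
      using vpi_nonneg vpi_le_H[OF \<pi>'] by (simp add: abs_le_iff)
    then have "integrable (P h (s, \<sigma> s)) (vpi p P \<pi>' (Suc h))"
      using next_meas by (intro integrable_P[OF h])
    then have "(\<integral>s'. ?W s' - \<epsilon> / 2 \<partial>P h (s, \<sigma> s)) \<le> (\<integral>s'. vpi p P \<pi>' (Suc h) s' \<partial>P h (s, \<sigma> s))"
      using W_int next_approx by (intro integral_mono) auto
    moreover have "(\<integral>s'. ?W s' - \<epsilon> / 2 \<partial>P h (s, \<sigma> s)) = (\<integral>s'. ?W s' \<partial>P h (s, \<sigma> s)) - \<epsilon> / 2"
      using W_int by (simp add: prob_space)
    ultimately have "(\<integral>s'. ?W s' \<partial>P h (s, \<sigma> s)) - \<epsilon> / 2 \<le> (\<integral>s'. vpi p P \<pi>' (Suc h) s' \<partial>P h (s, \<sigma> s))"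
      by simp
    then have "Qopt p P h (s, \<sigma> s) - \<epsilon> / 2 \<le> vpi p P \<pi> h s"
      using h by (simp add: \<pi>_def vpi_step vpi_fun_upd_current Qopt_def)
    then show "Vopt p P h s - \<epsilon> \<le> vpi p P \<pi> h s"
      using \<sigma>_approx[of s] by (simp add: Vopt_h)
  qed
qed

lemma bellman_invariant_step:
  assumes h: "h \<in> {1..Hh p}" and inv: "bellman_invariant (Suc h)"
  shows "bellman_invariant h"
proof -
  let ?W = "Vopt p P (Suc h)"
  have lip: "(Lc p (Suc h))-lipschitz_on UNIV ?W" and W_nonneg: "\<And>s. 0 \<le> ?W s"
    and W_upper: "\<And>\<pi> s. \<pi> \<in> policies \<Longrightarrow> vpi p P \<pi> (Suc h) s \<le> ?W s"
    using inv by (auto simp: bellman_invariant_def)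
  have W_int: "integrable (P h x) ?W" for x using integrable_P_lipschitz[OF h lip] .
  have Vopt_h: "Vopt p P h s = (SUP a. Qopt p P h (s, a))" for s
    using h by (simp add: Vopt_step)
  have le_Vopt: "Qopt p P h (s, a) \<le> Vopt p P h s" for s a
    unfolding Vopt_h by (rule cSUP_upper[OF _ Qopt_continuous_bdd(2)[OF h lip]]) simp
  have "0 \<le> Vopt p P h s" for s
  proof -
    have "0 \<le> Qopt p P h (s, undefined)"
      using rw_nonneg h W_nonneg by (auto simp: Qopt_def intro!: integral_nonneg_AE)
    then show ?thesis using le_Vopt[of s undefined] by linarith
  qed
  moreover have "vpi p P \<pi> h s \<le> Vopt p P h s" if "\<pi> \<in> policies" for \<pi> s
  proof -
    have "(\<integral>s'. vpi p P \<pi> (Suc h) s' \<partial>P h (s, \<pi> h s)) \<le> (\<integral>s'. ?W s' \<partial>P h (s, \<pi> h s))"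
      using W_int W_upper[OF that] W_nonneg by (intro integral_mono') auto
    then have "vpi p P \<pi> h s \<le> Qopt p P h (s, \<pi> h s)"
      using h by (simp add: vpi_step Qopt_def)
    then show ?thesis using le_Vopt order_trans by blast
  qed
  ultimately show ?thesis
    unfolding bellman_invariant_def
    using Vopt_lipschitz[OF h lip] near_optimal_policy[OF h inv] by metis
qed

lemma bellman_invariant_holds:
  assumes "h \<in> {1..Suc (Hh p)}"
  shows "bellman_invariant h"
proof -
  have "h \<le> Suc (Hh p)" using assms by simp
  then show ?thesis
  proof (induction rule: inc_induct)
    case base
    show ?case by (rule bellman_invariant_beyond_horizon)
  next
    case (step n)
    then show ?case using assms bellman_invariant_step by simp
  qed
qed

lemma Vstar_eq_Vopt:
  assumes h: "h \<in> {1..Suc (Hh p)}"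
  shows "Vstar p P h = Vopt p P h"
proof
  fix s
  show "Vstar p P h s = Vopt p P h s"
  proof (cases "h = Suc (Hh p)")
    case True
    then show ?thesis by (simp add: Vstar_def Vopt_beyond_horizon)
  next
    case False
    have inv: "bellman_invariant h" using bellman_invariant_holds[OF h] .
    have bdd: "bdd_above ((\<lambda>\<pi>. vpi p P \<pi> h s) ` policies)"
      using vpi_le_H h by (intro bdd_aboveI) auto
    have "vpi p P \<pi> h s \<le> Vopt p P h s" if "\<pi> \<in> policies" for \<pi>
      using inv that by (simp add: bellman_invariant_def)
    then have "(SUP \<pi>\<in>policies. vpi p P \<pi> h s) \<le> Vopt p P h s"
      using constant_policy by (intro cSUP_least) blast+
    moreover have "Vopt p P h s \<le> (SUP \<pi>\<in>policies. vpi p P \<pi> h s)"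
    proof (rule field_le_epsilon)
      fix \<epsilon> :: real assume "0 < \<epsilon>"
      then obtain \<pi> where "\<pi> \<in> policies" "Vopt p P h s - \<epsilon> \<le> vpi p P \<pi> h s"
        using inv unfolding bellman_invariant_def by blast
      then show "Vopt p P h s \<le> (SUP \<pi>\<in>policies. vpi p P \<pi> h s) + \<epsilon>"
        using cSUP_upper[OF _ bdd] by force
    qed
    ultimately show ?thesis using False h by (simp add: Vstar_def)
  qed
qed

lemma Vopt_le_H:
  assumes h: "h \<in> {1..Suc (Hh p)}"
  shows "Vopt p P h s \<le> real (Hh p)"
proof (rule field_le_epsilon)
  fix \<epsilon> :: real assume "0 < \<epsilon>"
  then obtain \<pi> where "\<pi> \<in> policies" "Vopt p P h s - \<epsilon> \<le> vpi p P \<pi> h s"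
    using bellman_invariant_holds[OF h] unfolding bellman_invariant_def by blast
  moreover have "vpi p P \<pi> h s \<le> real (Hh p)"
    using vpi_le_H \<open>\<pi> \<in> policies\<close> h by simp
  ultimately show "Vopt p P h s \<le> real (Hh p) + \<epsilon>" by linarith
qed

end

section \<open>Optimism\<close>

lemma optimistic_bonus_bound:
  fixes C e1 e4 H E ma mb Va Vb S :: real
  assumes C: "0 < C" and e1: "0 \<le> e1" and e4: "16 * e1 \<le> e4" and H: "0 \<le> H"
    and Vb: "0 \<le> Vb" and mab: "ma \<le> mb"
    and concentration: "E - ma \<le> 8 * sqrt (Va * e1 / C) + H * e4 / C + S"
    and std: "sqrt Va \<le> sqrt Vb + sqrt (H * (mb - ma))"
  shows "E \<le> mb + (9 * sqrt (Vb * e4 / C) + 162 * H * e4 / C + S)"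
proof -
  define q where "q = sqrt (e1 / C)"
  have "sqrt (Va * e1 / C) = sqrt Va * q"
    unfolding q_def by (simp add: real_sqrt_mult[symmetric])
  also have "\<dots> \<le> (sqrt Vb + sqrt (H * (mb - ma))) * q"
    by (rule mult_right_mono[OF std]) (use e1 C in \<open>simp add: q_def\<close>)
  finally have split: "sqrt (Va * e1 / C) \<le> sqrt Vb * q + sqrt (H * (mb - ma)) * q"
    by (simp add: distrib_right)
  have "sqrt Vb * q = sqrt (Vb * e1 / C)"
    unfolding q_def by (simp add: real_sqrt_mult[symmetric])
  also have "\<dots> \<le> sqrt (Vb * e4 / C)"
    using Vb C e1 e4 by (intro real_sqrt_le_mono divide_right_mono mult_left_mono) auto
  moreover have "0 \<le> sqrt Vb * q" using Vb e1 C by (simp add: q_def)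
  ultimately have variance_term: "8 * (sqrt Vb * q) \<le> 9 * sqrt (Vb * e4 / C)"
    by linarith
  \<comment> \<open>AM-GM: \<open>8 t r \<le> t\<^sup>2 + 16 r\<^sup>2\<close>\<close>
  define t r where "t = sqrt (mb - ma)" and "r = sqrt (H * e1 / C)"
  have "sqrt (H * (mb - ma)) * q = t * r"
    unfolding t_def r_def q_def real_sqrt_mult[symmetric]
    by (intro arg_cong[where f=sqrt]) (simp add: field_simps)
  moreover have "8 * (t * r) \<le> t\<^sup>2 + 16 * r\<^sup>2"
    using sum_squares_ge_zero[of "t - 4 * r" 0] by (simp add: power2_eq_square algebra_simps)
  moreover have "t\<^sup>2 = mb - ma" "r\<^sup>2 = H * e1 / C"
    unfolding t_def r_def using mab H e1 C by auto
  moreover have "16 * (H * e1 / C) \<le> H * e4 / C"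
    using H C e4 by (simp add: divide_right_mono mult_left_mono mult.left_commute[of 16])
  ultimately have mean_term: "8 * (sqrt (H * (mb - ma)) * q) \<le> (mb - ma) + H * e4 / C"
    by linarith
  have "0 \<le> H * e4 / C" using H C e4 e1 by simp
  then show ?thesis using concentration split variance_term mean_term by linarith
qed

lemma wgt_nonneg:
  assumes "\<forall>z\<ge>0. 0 \<le> gk p z" and "0 < sig p"
  shows "0 \<le> wgt p Ss As h l x"
  using assms rho_nonneg[of x "(Ss l h, As l h)"] by (simp add: wgt_def)

lemma normalized_wgt:
  assumes "\<forall>z\<ge>0. 0 \<le> gk p z" and "0 < sig p" and "0 < bet p"
  shows "0 < Ccnt p Ss As k h x"
    and "0 \<le> wgt p Ss As h l x / Ccnt p Ss As k h x"
    and "(\<Sum>l\<in>{1..<k}. wgt p Ss As h l x / Ccnt p Ss As k h x) \<le> 1"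
proof -
  have "0 \<le> (\<Sum>l\<in>{1..<k}. wgt p Ss As h l x)"
    using wgt_nonneg[OF assms(1,2)] by (intro sum_nonneg) auto
  then show C_pos: "0 < Ccnt p Ss As k h x"
    using assms(3) by (simp add: Ccnt_def)
  show "0 \<le> wgt p Ss As h l x / Ccnt p Ss As k h x"
    using wgt_nonneg[OF assms(1,2)] C_pos by simp
  show "(\<Sum>l\<in>{1..<k}. wgt p Ss As h l x / Ccnt p Ss As k h x) \<le> 1"
    using assms(3) C_pos by (simp add: Ccnt_def flip: sum_divide_distrib)
qed

locale kbvi_optimism = lipschitz_mdp p P
  for p :: "('s::metric_space, 'a::metric_space) kbvi_prm" and P +
  fixes Ss :: "nat \<Rightarrow> nat \<Rightarrow> 's" and As :: "nat \<Rightarrow> nat \<Rightarrow> 'a"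
  assumes event: "eventE p P Ss As"
    and g_nonneg: "\<forall>z\<ge>0. 0 \<le> gk p z"
    and sig_pos: "0 < sig p" and bet_pos: "0 < bet p"
    and eta1_nonneg: "0 \<le> eta1 p" and eta4_ge: "16 * eta1 p \<le> eta4 p"
begin

lemma Qopt_le_Qtil:
  assumes k: "k \<in> {1..Kk p}" and h: "h \<in> {1..Hh p}"
    and W_lower: "\<And>s. Vopt p P (Suc h) s \<le> W s" and W_upper: "\<And>s. W s \<le> real (Hh p)"
  shows "Qopt p P h x \<le> Qtil p Ss As k h W x"
proof -
  let ?V = "Vopt p P (Suc h)" and ?C = "Ccnt p Ss As k h x"
  define w where "w l = wgt p Ss As h l x / ?C" for l
  have C_pos: "0 < ?C" and w_nonneg: "\<forall>l\<in>{1..<k}. 0 \<le> w l" and w_sum: "(\<Sum>l\<in>{1..<k}. w l) \<le> 1"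
    using normalized_wgt[OF g_nonneg sig_pos bet_pos] by (simp_all add: w_def)
  have Phat_w: "Phat p Ss As k h f x = (\<Sum>l\<in>{1..<k}. w l * f (Ss l (Suc h)))" for f
    by (simp add: Phat_def w_def)
  have Vhat_w: "Vhat p Ss As k h f x
      = (\<Sum>l\<in>{1..<k}. w l * (f (Ss l (Suc h)) - (\<Sum>j\<in>{1..<k}. w j * f (Ss j (Suc h))))\<^sup>2)" for f
    unfolding Vhat_def Phat_w w_def ..
  have V_nonneg: "0 \<le> ?V s" for s
    using bellman_invariant_holds[of "Suc h"] h by (simp add: bellman_invariant_def)
  have Vstar_V: "Vstar p P (Suc h) = ?V"
    using h by (intro Vstar_eq_Vopt) simp
  have concentration: "(\<integral>s'. ?V s' \<partial>P h x) - Phat p Ss As k h ?V x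
      \<le> 8 * sqrt (Vhat p Ss As k h ?V x * eta1 p / ?C) + real (Hh p) * eta4 p / ?C + sig p * Ddel p"
  proof -
    have "\<bar>Phat p Ss As k h (Vstar p P (Suc h)) x - (\<integral>s'. Vstar p P (Suc h) s' \<partial>P h x)\<bar>
      \<le> 8 * sqrt (Vhat p Ss As k h (Vstar p P (Suc h)) x * eta1 p / ?C)
        + real (Hh p) * eta4 p / ?C + sig p * Ddel p"
      using event k h unfolding eventE_def by (cases x) auto
    then show ?thesis by (simp add: Vstar_V abs_le_iff)
  qed
  have std: "sqrt (Vhat p Ss As k h ?V x)
      \<le> sqrt (Vhat p Ss As k h W x) + sqrt (real (Hh p) * (Phat p Ss As k h W x - Phat p Ss As k h ?V x))"
    unfolding Vhat_w Phat_w
    by (rule sqrt_weighted_variance_le[OF w_nonneg w_sum])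
      (use W_lower W_upper V_nonneg in \<open>smt (verit)\<close>)
  have "Phat p Ss As k h ?V x \<le> Phat p Ss As k h W x"
    unfolding Phat_w using w_nonneg W_lower by (intro sum_mono mult_left_mono) auto
  moreover have "0 \<le> Vhat p Ss As k h f x" for f
    unfolding Vhat_w using w_nonneg by (intro sum_nonneg) auto
  ultimately have "(\<integral>s'. ?V s' \<partial>P h x) \<le> Phat p Ss As k h W x + bonus p Ss As k h W x"
    unfolding bonus_def
    by (intro optimistic_bonus_bound[OF C_pos eta1_nonneg eta4_ge _ _ _ concentration std]) auto
  then show ?thesis by (simp add: Qopt_def Qtil_def)
qed

lemma Qk_bdd_above: "bdd_above (range (\<lambda>a. Qk p Ss As k h W (s, a)))"
proof (cases "k \<le> 1")
  case True
  then show ?thesis by (simp add: Qk_def)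
next
  case False
  let ?x = "\<lambda>l. (Ss l h, As l h)"
  let ?D = "diameter (UNIV :: 's set) + diameter (UNIV :: 'a set)"
  show ?thesis
  proof (rule bdd_aboveI)
    fix y assume "y \<in> range (\<lambda>a. Qk p Ss As k h W (s, a))"
    then obtain a where "y = Min ((\<lambda>l. Qtil p Ss As k h W (?x l) + Lc p h * rho (s, a) (?x l)) ` {1..<k})"
      using False by (auto simp: Qk_def)
    then have "y \<le> Qtil p Ss As k h W (?x 1) + Lc p h * rho (s, a) (?x 1)"
      using False by (simp add: Min_le)
    moreover have "rho (s, a) (?x 1) \<le> ?D"
      unfolding rho_def
      using compact_UNIV_dist_bound[OF compact_states] compact_UNIV_dist_bound[OF compact_actions]
      by (simp add: add_mono)
    ultimately show "y \<le> Qtil p Ss As k h W (?x 1) + Lc p h * ?D"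
      using Lc_nonneg by (smt (verit) mult_left_mono)
  qed
qed

lemma Qopt_le_Qk:
  assumes k: "k \<in> {1..Kk p}" and h: "h \<in> {1..Hh p}"
    and W_lower: "\<And>s. Vopt p P (Suc h) s \<le> W s" and W_upper: "\<And>s. W s \<le> real (Hh p)"
  shows "Qopt p P h (s, a) \<le> Qk p Ss As k h W (s, a)"
proof -
  have lip: "(Lc p (Suc h))-lipschitz_on UNIV (Vopt p P (Suc h))"
    using bellman_invariant_holds[of "Suc h"] h by (simp add: bellman_invariant_def)
  show ?thesis
  proof (cases "k = 1")
    case True
    have "Qopt p P h (s, a) \<le> (SUP a. Qopt p P h (s, a))"
      by (rule cSUP_upper[OF _ Qopt_continuous_bdd(2)[OF h lip]]) simp
    also have "\<dots> = Vopt p P h s" using h by (simp add: Vopt_step)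
    also have "\<dots> \<le> real (Hh p)" using Vopt_le_H h by simp
    finally show ?thesis using True by (simp add: Qk_def)
  next
    case False
    let ?x = "\<lambda>l. (Ss l h, As l h)"
    let ?bound = "\<lambda>l. Qtil p Ss As k h W (?x l) + Lc p h * rho (s, a) (?x l)"
    have "Qopt p P h (s, a) \<le> Min (?bound ` {1..<k})"
    proof (rule Min.boundedI)
      show "finite (?bound ` {1..<k})" and "?bound ` {1..<k} \<noteq> {}"
        using k False by auto
      fix y assume "y \<in> ?bound ` {1..<k}"
      then obtain l where y: "y = ?bound l" by blast
      have "Qopt p P h (s, a) \<le> Qopt p P h (?x l) + Lc p h * rho (s, a) (?x l)"
        using Qopt_lipschitz[OF h lip, of "(s, a)" "?x l"] by (simp add: abs_le_iff)
      also have "Qopt p P h (?x l) \<le> Qtil p Ss As k h W (?x l)"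
        by (rule Qopt_le_Qtil[OF k h W_lower W_upper])
      finally show "Qopt p P h (s, a) \<le> y" by (simp add: y)
    qed
    then show ?thesis using False k by (simp add: Qk_def)
  qed
qed

lemma Vopt_le_Vstep:
  assumes k: "k \<in> {1..Kk p}" and h: "h \<in> {1..Hh p}"
    and W_lower: "\<And>s. Vopt p P (Suc h) s \<le> W s" and W_upper: "\<And>s. W s \<le> real (Hh p)"
  shows "Vopt p P h s \<le> Vstep p Ss As k h W s"
proof -
  have "(SUP a. Qopt p P h (s, a)) \<le> (SUP a. Qk p Ss As k h W (s, a))"
    using Qopt_le_Qk[OF k h W_lower W_upper] Qk_bdd_above by (intro cSUP_mono) auto
  then show ?thesis
    using Vopt_le_H[of h s] h by (simp add: Vopt_step Vstep_def)
qed

lemma Vopt_le_Vk: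
  assumes k: "k \<in> {1..Kk p}" and h: "h \<in> {1..Suc (Hh p)}"
  shows "Vopt p P h s \<le> Vk p Ss As k h s"
proof -
  have "h \<le> Suc (Hh p)" using h by simp
  then show ?thesis
  proof (induction arbitrary: s rule: inc_induct)
    case base
    show ?case by (simp add: Vopt_beyond_horizon Vk_beyond_horizon)
  next
    case (step n)
    then have "n \<in> {1..Hh p}" using h by simp
    then show ?case using Vopt_le_Vstep[OF k _ step.IH Vk_le_H] by (simp add: Vk_step)
  qed
qed

end

lemma eta_pos: "0 < del p \<Longrightarrow> del p < 1 \<Longrightarrow> 0 < eta p"
  unfolding eta_def by (intro ln_gt_zero) (simp add: field_simps)

lemma cC1_pos:
  assumes "0 < gk p 4" and "\<forall>z\<ge>0. gk p z \<le> cC1 p * exp (- z\<^sup>2 / 2)"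
  shows "0 < cC1 p"
proof -
  have "gk p 4 \<le> cC1 p * exp (- 4\<^sup>2 / 2)" by (rule assms(2)[rule_format]) simp
  then have "0 < cC1 p * exp (- 4\<^sup>2 / 2)" using assms(1) by linarith
  then show ?thesis by (simp add: zero_less_mult_iff)
qed

lemma eta4_ge_16_eta1: "0 \<le> eta p \<Longrightarrow> 0 \<le> bet p \<Longrightarrow> 16 * eta1 p \<le> eta4 p"
  unfolding eta4_def eta2_def by simp

theorem lemma5:
  fixes p :: "('s::metric_space, 'a::metric_space) kbvi_prm"
    and P :: "nat \<Rightarrow> 's \<times> 'a \<Rightarrow> 's measure"
    and Ss :: "nat \<Rightarrow> nat \<Rightarrow> 's" and As :: "nat \<Rightarrow> nat \<Rightarrow> 'a"
    and g' :: "real \<Rightarrow> real"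
  assumes compS: "compact (UNIV :: 's set)"
    and compA: "compact (UNIV :: 'a set)"
    and kernel: "\<forall>h\<in>{1..Hh p}. P h \<in> borel \<rightarrow>\<^sub>M prob_algebra borel"
    and rw_nonneg: "\<forall>h\<in>{1..Hh p}. \<forall>s a. 0 \<le> rw p h s a"
    and rw_bound: "\<forall>\<pi>\<in>policies. \<forall>h\<in>{1..Hh p}. \<forall>s. vpi p P \<pi> h s \<le> real (Hh p)"
    and lr_pos: "0 < lr p" and lp_pos: "0 < lp p" and lp_lt1: "lp p < 1"
    and rw_lip: "\<forall>h\<in>{1..Hh p}. \<forall>s a s' a'.
                   \<bar>rw p h s a - rw p h s' a'\<bar> \<le> lr p * rho (s, a) (s', a')"
    and P_lip: "\<forall>h\<in>{1..Hh p}. \<forall>s a s' a'.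
                   W1 (P h (s, a)) (P h (s', a')) \<le> ennreal (lp p * rho (s, a) (s', a'))"
    and g_range: "\<forall>z\<ge>0. 0 \<le> gk p z \<and> gk p z \<le> 1"
    and g_deriv: "\<forall>z\<ge>0. (gk p has_real_derivative g' z) (at z within {0..})"
    and g_mono: "\<forall>x y. 0 \<le> x \<and> x \<le> y \<longrightarrow> gk p y \<le> gk p x"
    and g_4: "gk p 4 > 0"
    and g_tail: "\<forall>z\<ge>0. gk p z \<le> cC1 p * exp (- z\<^sup>2 / 2)"
    and g'_bound: "\<forall>z\<ge>0. \<bar>g' z\<bar> \<le> cC2 p"
    and sig_pos: "0 < sig p"
    and bet_pos: "0 < bet p" and bet_le1: "bet p \<le> 1"
    and del_pos: "0 < del p" and del_lt1: "del p < 1"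
    and greedy: "\<forall>k\<in>{1..Kk p}. \<forall>h\<in>{1..Hh p}. \<forall>a.
                   Qk p Ss As k h (Vk p Ss As k (Suc h)) (Ss k h, a)
                   \<le> Qk p Ss As k h (Vk p Ss As k (Suc h)) (Ss k h, As k h)"
    and E: "eventE p P Ss As"
  shows "\<forall>s. \<forall>h\<in>{1..Hh p + 1}. \<forall>k\<in>{1..Kk p}. Vstar p P h s \<le> Vk p Ss As k h s"
proof -
  have eta: "0 < eta p" using eta_pos del_pos del_lt1 .
  interpret kbvi_optimism p P Ss As
  proof unfold_locales
    show "0 \<le> eta1 p"
      using cC1_pos[OF g_4 g_tail] eta by (simp add: eta1_def)
    show "16 * eta1 p \<le> eta4 p"
      using eta bet_pos by (intro eta4_ge_16_eta1) auto
  qed (use assms in auto)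
  show ?thesis
    using Vstar_eq_Vopt Vopt_le_Vk by simp
qed

end
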